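(* There exist $\epsilon_0>0$ and $C>0$, independent of $\nu,k,\lambda$, such that for $0<\nu\le1$, $10\nu\le|k|<1$, $\lambda\in\mathbb R$, $0\le\epsilon\le\epsilon_0$ and $F\in L^2(I)$, $$(1+|\lambda-1|)|c_1(\lambda)|+(1+|\lambda+1|)|c_2(\lambda)|\le C\nu^{-1/6}|k|^{-5/6}\|F\|_{L^2}.$$
   Context: Let $I=(-1,1)$, $\nu>0$, $k\ne0$, $\lambda\in\mathbb R$, $\epsilon\ge0$. Let $w_{Na}$ solve the Navier-slip resolvent problem $-\nu(w''-k^2w)+ik(y-\lambda)w-\epsilon\nu^{1/3}|k|^{2/3}w=F$ on $I$, $w(\pm1)=0$. Define $$c_1(\lambda)=\int_{-1}^1\frac{\sinh k(y+1)}{\sinh 2k}w_{Na}(y)\,dy,\qquad c_2(\lambda)=\int_{-1}^1\frac{\sinh k(1-y)}{\sinh 2k}w_{Na}(y)\,dy.$$ *)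

theory Defs
  imports "HOL-Analysis.Analysis"
begin

definition is_L2 :: "(real \<Rightarrow> complex) \<Rightarrow> bool" where
  "is_L2 F \<longleftrightarrow> F \<in> borel_measurable (lebesgue_on {-1..1})
      \<and> integrable (lebesgue_on {-1..1}) (\<lambda>y. (cmod (F y))^2)"

definition L2norm :: "(real \<Rightarrow> complex) \<Rightarrow> real" where
  "L2norm F = sqrt (LINT y|lebesgue_on {-1..1}. (cmod (F y))^2)"

text \<open>w is a (strong, H^2) solution of
  -nu (w'' - k^2 w) + i k (y - lam) w - eps nu^(1/3) |k|^(2/3) w = F on I, w(-1) = w(1) = 0:
  w is C^1 on [-1,1] and w' is the indefinite integral of the w'' dictated by the equation.\<close>
definition resolvent_sol ::
  "real \<Rightarrow> real \<Rightarrow> real \<Rightarrow> real \<Rightarrow> (real \<Rightarrow> complex) \<Rightarrow> (real \<Rightarrow> complex) \<Rightarrow> bool" where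
  "resolvent_sol nu k lam eps F w \<longleftrightarrow>
     w (-1) = 0 \<and> w 1 = 0 \<and>
     (\<exists>w'. (\<forall>y\<in>{-1..1}. (w has_vector_derivative w' y) (at y within {-1..1})) \<and>
       (\<forall>y\<in>{-1..1}.
          ((\<lambda>s. complex_of_real (k^2) * w s
               + (\<i> * complex_of_real (k * (s - lam)) * w s
                  - complex_of_real (eps * nu powr (1/3) * \<bar>k\<bar> powr (2/3)) * w s
                  - F s) / complex_of_real nu)
            has_integral (w' y - w' (-1))) {-1..y}))"

definition c1 :: "real \<Rightarrow> (real \<Rightarrow> complex) \<Rightarrow> complex" where
  "c1 k w = integral {-1..1} (\<lambda>y. complex_of_real (sinh (k * (y + 1)) / sinh (2 * k)) * w y)"

definition c2 :: "real \<Rightarrow> (real \<Rightarrow> complex) \<Rightarrow> complex" where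
  "c2 k w = integral {-1..1} (\<lambda>y. complex_of_real (sinh (k * (1 - y)) / sinh (2 * k)) * w y)"

end

theory Submission
  imports Defs
begin

(* With d = (nu / |k|)^(1/3), so that nu = |k| d^3 and the damping is eps |k| d, testing the
   equation against conj w and against (y - lam) conj w (real resp. imaginary part) gives
     (nu k^2 - eps |k| d) ||w||^2 + nu ||w'||^2 <= ||F|| ||w||,
     |k| ||(y - lam) w||^2 <= ||F|| ||(y - lam) w|| + nu int |w| |w'|.
   Together with |w|^2 <= 2 int |w| |w'| and the splitting
     ||w||^2 <= 2 pi d int |w| |w'| + ||(y - lam) w||^2 / d^2
   coming from the Lorentzian weight d^2 / (d^2 + (y - lam)^2), these close for eps <= 1/400 to
   |k| d ||w|| + |k| ||(y - lam) w|| <= C ||F||.  The kernels of c1 and c2 are bounded by 1, and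
   1 + |lam -+ 1| <= 3 + |y - lam| on [-1, 1], so the weighted coefficients are bounded by
   int |w| + int |y - lam| |w|.  Cauchy-Schwarz against (d^2 + (y - lam)^2)^(-1/2), whose square
   integrates to at most pi / d, turns this into
     C ||F|| / (|k| sqrt d) = C nu^(-1/6) |k|^(-5/6) ||F||. *)

section \<open>Integration by parts against an indefinite integral\<close>

lemma integral_lebesgue_on_cut:
  fixes h :: "real \<Rightarrow> 'b::euclidean_space"
  assumes h: "integrable (lebesgue_on {a..b}) h" and cd: "a \<le> c" "d \<le> b"
  shows "(\<integral>t. (if t \<in> {c..d} then h t else 0) \<partial>lebesgue_on {a..b}) = integral {c..d} h"
proof -
  have "integrable (lebesgue_on {a..b}) (\<lambda>t. indicator {c..d} t *\<^sub>R h t)"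
    using h cd by (intro integrable_mult_indicator) (auto simp: sets_restrict_space_iff)
  then have "integrable (lebesgue_on {a..b}) (\<lambda>t. if t \<in> {c..d} then h t else 0)"
    by (rule Bochner_Integration.integrable_cong[THEN iffD1, rotated -1]) (auto simp: indicator_def)
  then have "(\<integral>t. (if t \<in> {c..d} then h t else 0) \<partial>lebesgue_on {a..b})
      = integral {a..b} (\<lambda>t. if t \<in> {c..d} then h t else 0)"
    by (rule lebesgue_integral_eq_integral) auto
  also have "\<dots> = integral ({c..d} \<inter> {a..b}) h"
    by (rule integral_restrict_Int)
  also have "{c..d} \<inter> {a..b} = {c..d}"
    using cd by auto
  finally show ?thesis .
qed

lemma integrable_triangle_product:
  fixes g q :: "real \<Rightarrow> complex"
  assumes g: "g absolutely_integrable_on {a..b}" and q: "continuous_on {a..b} q"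
  shows "integrable (lebesgue_on {a..b} \<Otimes>\<^sub>M lebesgue_on {a..b})
    (\<lambda>(s, t). if t \<in> {s..b} then g s * q t else 0)"
proof -
  define M where "M = lebesgue_on {a..b}"
  interpret M: finite_measure M unfolding M_def by (rule finite_measure_lebesgue_on) auto
  interpret P: pair_sigma_finite M M by unfold_locales
  have [measurable]: "g \<in> borel_measurable M"
    unfolding M_def using g absolutely_integrable_measurable[of "{a..b}" g] by simp
  have [measurable]: "q \<in> borel_measurable M" "(\<lambda>x. x) \<in> borel_measurable M"
    unfolding M_def by (auto intro!: continuous_imp_measurable_on_sets_lebesgue q continuous_intros)
  have g_int: "integrable M g"
    unfolding M_def using g by (simp add: integrable_restrict_space set_integrable_def)
  obtain B where B: "\<And>t. t \<in> space M \<Longrightarrow> norm (q t) \<le> B" and "B > 0"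
    using compact_imp_bounded[OF compact_continuous_image[OF q compact_Icc]]
    unfolding bounded_pos M_def by fastforce
  define f where "f s t = (if t \<in> {s..b} then g s * q t else 0)" for s t
  have [measurable]: "case_prod f \<in> borel_measurable (M \<Otimes>\<^sub>M M)"
    unfolding f_def atLeastAtMost_iff by measurable
  have f_bound: "norm (f s t) \<le> norm (g s) * B" if "t \<in> space M" for s t
    using B[OF that] \<open>B > 0\<close> unfolding f_def by (auto simp: norm_mult intro: mult_left_mono)
  have "f s \<in> borel_measurable M" for s
    unfolding f_def atLeastAtMost_iff by measurable
  then have f_int: "integrable M (f s)" for s
    by (intro M.integrable_const_bound[where B="norm (g s) * B"]) (auto simp: f_bound)
  have "integrable (M \<Otimes>\<^sub>M M) (case_prod f)"
  proof (rule P.Fubini_integrable)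
    show "integrable M (\<lambda>s. \<integral>t. norm (case_prod f (s, t)) \<partial>M)"
    proof (rule Bochner_Integration.integrable_bound)
      show "integrable M (\<lambda>s. norm (g s) * B * measure M (space M))"
        using g_int by auto
      show "AE s in M. norm (\<integral>t. norm (case_prod f (s, t)) \<partial>M)
          \<le> norm (norm (g s) * B * measure M (space M))"
      proof (rule AE_I2)
        fix s
        have "(\<integral>t. norm (f s t) \<partial>M) \<le> (\<integral>t. norm (g s) * B \<partial>M)"
          using f_int f_bound by (intro integral_mono) auto
        then show "norm (\<integral>t. norm (case_prod f (s, t)) \<partial>M)
            \<le> norm (norm (g s) * B * measure M (space M))"
          using \<open>B > 0\<close> by (simp add: abs_mult mult_ac)
      qed
    qed measurable
  qed (use f_int in auto)
  then show ?thesis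
    by (simp add: M_def f_def[abs_def])
qed

lemma Fubini_triangle_integral:
  fixes g q :: "real \<Rightarrow> complex"
  assumes g: "g absolutely_integrable_on {a..b}" and q: "continuous_on {a..b} q"
  shows "integral {a..b} (\<lambda>s. g s * integral {s..b} q)
    = integral {a..b} (\<lambda>t. q t * integral {a..t} g)"
proof -
  define M where "M = lebesgue_on {a..b}"
  interpret M: finite_measure M unfolding M_def by (rule finite_measure_lebesgue_on) auto
  interpret P: pair_sigma_finite M M by unfold_locales
  define f where "f s t = (if t \<in> {s..b} then g s * q t else 0)" for s t
  have f_int: "integrable (M \<Otimes>\<^sub>M M) (case_prod f)"
    using integrable_triangle_product[OF g q] by (simp add: M_def f_def[abs_def])
  have inner_t: "(\<integral>t. f s t \<partial>M) = g s * integral {s..b} q" if "s \<in> {a..b}" for s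
  proof -
    have "(\<integral>t. f s t \<partial>M) = (\<integral>t. g s * (if t \<in> {s..b} then q t else 0) \<partial>M)"
      unfolding f_def by (intro Bochner_Integration.integral_cong) auto
    then have "(\<integral>t. f s t \<partial>M) = g s * (\<integral>t. (if t \<in> {s..b} then q t else 0) \<partial>M)"
      by simp
    with that integral_lebesgue_on_cut[OF continuous_imp_integrable_real[OF q], of s b] show ?thesis
      unfolding M_def by simp
  qed
  have inner_s: "(\<integral>s. f s t \<partial>M) = q t * integral {a..t} g" if "t \<in> {a..b}" for t
  proof -
    have "(\<integral>s. f s t \<partial>M) = (\<integral>s. q t * (if s \<in> {a..t} then g s else 0) \<partial>M)"
      using that unfolding f_def M_def by (intro Bochner_Integration.integral_cong) auto
    moreover have "integrable M g"
      unfolding M_def using g by (simp add: integrable_restrict_space set_integrable_def)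
    ultimately show ?thesis
      using that integral_lebesgue_on_cut[of a b g a t] unfolding M_def by simp
  qed
  have "integral {a..b} (\<lambda>s. g s * integral {s..b} q) = integral {a..b} (\<lambda>s. \<integral>t. f s t \<partial>M)"
    by (rule integral_cong) (simp add: inner_t)
  also have "\<dots> = (\<integral>s. (\<integral>t. f s t \<partial>M) \<partial>M)"
    using P.integrable_fst[OF f_int] unfolding M_def
    by (intro lebesgue_integral_eq_integral[symmetric]) auto
  also have "\<dots> = (\<integral>t. (\<integral>s. f s t \<partial>M) \<partial>M)"
    by (rule P.Fubini_integral[OF f_int, symmetric])
  also have "\<dots> = integral {a..b} (\<lambda>t. \<integral>s. f s t \<partial>M)"
    using P.integrable_snd[OF f_int] unfolding M_def
    by (intro lebesgue_integral_eq_integral) auto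
  also have "\<dots> = integral {a..b} (\<lambda>t. q t * integral {a..t} g)"
    by (rule integral_cong) (simp add: inner_s)
  finally show ?thesis .
qed

lemma absolutely_integrable_continuous_mult:
  fixes g p :: "real \<Rightarrow> complex"
  assumes g: "g absolutely_integrable_on {a..b}" and p: "continuous_on {a..b} p"
  shows "(\<lambda>s. p s * g s) absolutely_integrable_on {a..b}"
proof (rule absolutely_integrable_bounded_measurable_product[where h="(*)", OF bilinear_times _ _ _ g])
  show "p \<in> borel_measurable (lebesgue_on {a..b})"
    by (rule continuous_imp_measurable_on_sets_lebesgue[OF p]) auto
  show "bounded (p ` {a..b})"
    by (rule compact_imp_bounded[OF compact_continuous_image[OF p compact_Icc]])
qed auto

text \<open>Here \<open>v\<close> is differentiable only almost everywhere, so the library's integration by parts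
  does not apply; the proof swaps the order of integration over a triangle instead.\<close>

lemma integration_by_parts_indefinite_integral:
  fixes g v p p' :: "real \<Rightarrow> complex"
  assumes ab: "a \<le> b" and g: "g absolutely_integrable_on {a..b}"
    and v: "\<And>y. y \<in> {a..b} \<Longrightarrow> (g has_integral (v y - v a)) {a..y}"
    and p: "\<And>t. t \<in> {a..b} \<Longrightarrow> (p has_vector_derivative p' t) (at t within {a..b})"
    and p': "continuous_on {a..b} p'"
  shows "integral {a..b} (\<lambda>s. g s * p s) = p b * v b - p a * v a - integral {a..b} (\<lambda>t. p' t * v t)"
proof -
  have g_int: "g integrable_on {a..b}"
    using g set_lebesgue_integral_eq_integral(1) by blast
  have v_eq: "integral {a..t} g = v t - v a" if "t \<in> {a..b}" for t
    using integral_unique[OF v[OF that]] .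
  have "continuous_on {a..b} (\<lambda>t. v a + integral {a..t} g)"
    by (intro continuous_intros indefinite_integral_continuous_1 g_int)
  then have v_cont: "continuous_on {a..b} v"
    by (rule continuous_on_eq) (simp add: v_eq)
  have ftc: "integral {s..b} p' = p b - p s" if "s \<in> {a..b}" for s
  proof -
    have "(p' has_integral (p b - p s)) {s..b}"
      using that by (intro fundamental_theorem_of_calculus)
        (auto intro: has_vector_derivative_within_subset[OF p])
    then show ?thesis
      by (rule integral_unique)
  qed
  have gp_int: "(\<lambda>s. g s * p s) integrable_on {a..b}"
    using absolutely_integrable_continuous_mult[OF g continuous_on_vector_derivative[OF p]]
      set_lebesgue_integral_eq_integral(1) by (simp add: mult.commute)
  have "(\<lambda>s. g s * p b - g s * p s) integrable_on {a..b}"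
    by (intro integrable_diff gp_int integrable_on_mult_left g_int)
  then have tail_int: "(\<lambda>s. g s * integral {s..b} p') integrable_on {a..b}"
    by (rule integrable_eq) (simp add: ftc algebra_simps)
  have "integral {a..b} (\<lambda>s. g s * p s) = integral {a..b} (\<lambda>s. g s * p b - g s * integral {s..b} p')"
    by (rule integral_cong) (simp add: ftc algebra_simps)
  also have "\<dots> = integral {a..b} (\<lambda>s. g s * p b) - integral {a..b} (\<lambda>s. g s * integral {s..b} p')"
    by (intro integral_diff tail_int integrable_on_mult_left g_int)
  also have "integral {a..b} (\<lambda>s. g s * integral {s..b} p')
      = integral {a..b} (\<lambda>t. p' t * integral {a..t} g)"
    by (rule Fubini_triangle_integral[OF g p'])
  also have "\<dots> = integral {a..b} (\<lambda>t. p' t * v t - v a * p' t)"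
    by (rule integral_cong) (simp add: v_eq algebra_simps)
  also have "\<dots> = integral {a..b} (\<lambda>t. p' t * v t) - v a * integral {a..b} p'"
    by (simp add: integral_diff integrable_continuous_interval continuous_intros p' v_cont)
  also have "integral {a..b} p' = p b - p a"
    using ftc[of a] ab by simp
  also have "integral {a..b} (\<lambda>s. g s * p b) = (v b - v a) * p b"
    using v_eq[of b] ab by simp
  finally show ?thesis
    by (simp add: algebra_simps)
qed

section \<open>Cauchy-Schwarz and the \<open>L\<^sup>2\<close> norm\<close>

lemma le_sqrt_mult_if_le_weighted_mean:
  fixes x A B :: real
  assumes "0 \<le> A" "0 \<le> B" and mean: "\<And>s. 0 < s \<Longrightarrow> x \<le> (s * A + B / s) / 2"
  shows "x \<le> sqrt A * sqrt B"
proof (rule field_le_epsilon)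
  fix e :: real
  assume "0 < e"
  define a b where "a = sqrt A" and "b = sqrt B"
  have ab: "0 \<le> a" "0 \<le> b" "A = a\<^sup>2" "B = b\<^sup>2"
    using assms(1,2) by (simp_all add: a_def b_def)
  define t where "t = e / (a + b + 1)"
  have t: "0 < t" "t * (a + b) \<le> e"
    using \<open>0 < e\<close> ab by (auto simp: t_def field_simps)
  have "x \<le> ((b + t) / (a + t) * A + B / ((b + t) / (a + t))) / 2"
    using t ab by (intro mean) auto
  also have "(b + t) / (a + t) * A \<le> (b + t) * a"
    using t ab by (simp add: field_simps power2_eq_square mult_left_mono)
  also have "B / ((b + t) / (a + t)) \<le> b * (a + t)"
    using t ab by (simp add: field_simps power2_eq_square mult_left_mono)
  finally have "x \<le> a * b + t * (a + b) / 2"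
    by (simp add: field_simps)
  with t \<open>0 < e\<close> show "x \<le> sqrt A * sqrt B + e"
    by (simp add: a_def[symmetric] b_def[symmetric])
qed

lemma Cauchy_Schwarz_integral:
  fixes f g :: "'a::euclidean_space \<Rightarrow> real"
  assumes fg: "(\<lambda>x. f x * g x) integrable_on S" and f2: "(\<lambda>x. (f x)\<^sup>2) integrable_on S"
    and g2: "(\<lambda>x. (g x)\<^sup>2) integrable_on S"
  shows "integral S (\<lambda>x. f x * g x)
    \<le> sqrt (integral S (\<lambda>x. (f x)\<^sup>2)) * sqrt (integral S (\<lambda>x. (g x)\<^sup>2))"
proof (rule le_sqrt_mult_if_le_weighted_mean)
  fix s :: real
  assume "0 < s"
  have "f x * g x \<le> (s * (f x)\<^sup>2 + (g x)\<^sup>2 / s) / 2" for x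
  proof -
    have "0 \<le> (s * f x - g x)\<^sup>2 / s"
      using \<open>0 < s\<close> by simp
    then show ?thesis
      using \<open>0 < s\<close> by (simp add: field_simps power2_eq_square)
  qed
  then have "integral S (\<lambda>x. f x * g x) \<le> integral S (\<lambda>x. (s * (f x)\<^sup>2 + (g x)\<^sup>2 / s) / 2)"
    using f2 g2 by (intro integral_le fg)
      (auto intro!: integrable_on_divide integrable_add integrable_on_mult_right)
  also have "\<dots> = (s * integral S (\<lambda>x. (f x)\<^sup>2) + integral S (\<lambda>x. (g x)\<^sup>2) / s) / 2"
    using f2 g2
    by (simp add: integral_add integral_divide integrable_on_divide integrable_on_mult_right)
  finally show "integral S (\<lambda>x. f x * g x)
      \<le> (s * integral S (\<lambda>x. (f x)\<^sup>2) + integral S (\<lambda>x. (g x)\<^sup>2) / s) / 2" .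
qed (use f2 g2 in \<open>auto intro: integral_nonneg\<close>)

lemma Re_integral:
  fixes f :: "'a::euclidean_space \<Rightarrow> complex"
  shows "f integrable_on S \<Longrightarrow> Re (integral S f) = integral S (\<lambda>x. Re (f x))"
  by (metis has_integral_Re integrable_integral integral_unique)

lemma Im_integral:
  fixes f :: "'a::euclidean_space \<Rightarrow> complex"
  shows "f integrable_on S \<Longrightarrow> Im (integral S f) = integral S (\<lambda>x. Im (f x))"
  by (metis has_integral_Im integrable_integral integral_unique)

lemma L2norm_eq_sqrt_integral:
  assumes "integrable (lebesgue_on {-1..1}) (\<lambda>y. (cmod (f y))\<^sup>2)"
  shows "L2norm f = sqrt (integral {-1..1} (\<lambda>y. (cmod (f y))\<^sup>2))"
  using assms unfolding L2norm_def by (simp add: lebesgue_integral_eq_integral)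

lemma square_integrable_continuous:
  fixes f :: "real \<Rightarrow> complex"
  assumes "continuous_on {-1..1} f"
  shows "integrable (lebesgue_on {-1..1}) (\<lambda>y. (cmod (f y))\<^sup>2)"
  by (rule continuous_imp_integrable_real) (intro continuous_intros assms)

lemma integral_norm_mult_le_L2norm:
  assumes fg: "(\<lambda>s. f s * g s) absolutely_integrable_on {-1..1}"
    and f: "integrable (lebesgue_on {-1..1}) (\<lambda>y. (cmod (f y))\<^sup>2)"
    and g: "integrable (lebesgue_on {-1..1}) (\<lambda>y. (cmod (g y))\<^sup>2)"
  shows "integral {-1..1} (\<lambda>s. cmod (f s) * cmod (g s)) \<le> L2norm f * L2norm g"
  unfolding L2norm_eq_sqrt_integral[OF f] L2norm_eq_sqrt_integral[OF g]
proof (rule Cauchy_Schwarz_integral)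
  show "(\<lambda>s. cmod (f s) * cmod (g s)) integrable_on {-1..1}"
    using fg unfolding absolutely_integrable_on_def by (simp add: norm_mult)
qed (use f g in \<open>auto intro: integrable_on_lebesgue_on\<close>)

lemma norm_integral_mult_le_L2norm:
  assumes fg: "(\<lambda>s. f s * g s) absolutely_integrable_on {-1..1}"
    and f: "integrable (lebesgue_on {-1..1}) (\<lambda>y. (cmod (f y))\<^sup>2)"
    and g: "integrable (lebesgue_on {-1..1}) (\<lambda>y. (cmod (g y))\<^sup>2)"
  shows "norm (integral {-1..1} (\<lambda>s. f s * g s)) \<le> L2norm f * L2norm g"
proof -
  have "(\<lambda>s. cmod (f s) * cmod (g s)) integrable_on {-1..1}"
    using fg unfolding absolutely_integrable_on_def by (simp add: norm_mult)
  then have "norm (integral {-1..1} (\<lambda>s. f s * g s)) \<le> integral {-1..1} (\<lambda>s. cmod (f s) * cmod (g s))"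
    using fg set_lebesgue_integral_eq_integral(1)
    by (intro integral_norm_bound_integral) (auto simp: norm_mult)
  also have "\<dots> \<le> L2norm f * L2norm g"
    by (rule integral_norm_mult_le_L2norm[OF assms])
  finally show ?thesis .
qed

lemma L2norm_power2:
  fixes f :: "real \<Rightarrow> complex"
  assumes "integrable (lebesgue_on {-1..1}) (\<lambda>y. (cmod (f y))\<^sup>2)"
  shows "(L2norm f)\<^sup>2 = integral {-1..1} (\<lambda>y. (cmod (f y))\<^sup>2)"
  using assms by (simp add: L2norm_eq_sqrt_integral integral_nonneg integrable_on_lebesgue_on)

lemma L2norm_nonneg: "0 \<le> L2norm f"
  by (simp add: L2norm_def)

lemma L2norm_cnj: "L2norm (\<lambda>s. cnj (f s)) = L2norm f"
  by (simp add: L2norm_def)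

lemma L2norm_const_1: "L2norm (\<lambda>_. 1) = sqrt 2"
  by (simp add: L2norm_def measure_restrict_space)

section \<open>Scalar estimates\<close>

lemma Lorentzian_integral_le:
  fixes c d :: real
  assumes "a \<le> b" "0 < d"
  shows "(\<lambda>s. 1 / (d\<^sup>2 + (s - c)\<^sup>2)) integrable_on {a..b}"
    and "integral {a..b} (\<lambda>s. 1 / (d\<^sup>2 + (s - c)\<^sup>2)) \<le> pi / d"
proof -
  have "((\<lambda>s. arctan ((s - c) / d) / d) has_real_derivative 1 / (d\<^sup>2 + (t - c)\<^sup>2)) (at t)" for t
  proof -
    have "((\<lambda>s. arctan ((s - c) / d) / d)
        has_real_derivative inverse (1 + ((t - c) / d)\<^sup>2) * (1 / d) / d) (at t)"
      by (intro derivative_eq_intros DERIV_arctan[THEN DERIV_chain2]) (use \<open>0 < d\<close> in auto)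
    also have "1 + ((t - c) / d)\<^sup>2 = (d\<^sup>2 + (t - c)\<^sup>2) / d\<^sup>2"
      using \<open>0 < d\<close> by (simp add: power_divide field_simps)
    also have "inverse ((d\<^sup>2 + (t - c)\<^sup>2) / d\<^sup>2) * (1 / d) / d = 1 / (d\<^sup>2 + (t - c)\<^sup>2)"
      using \<open>0 < d\<close> by (simp add: power2_eq_square)
    finally show ?thesis .
  qed
  then have int: "((\<lambda>s. 1 / (d\<^sup>2 + (s - c)\<^sup>2)) has_integral
      (arctan ((b - c) / d) / d - arctan ((a - c) / d) / d)) {a..b}"
    using \<open>a \<le> b\<close> by (intro fundamental_theorem_of_calculus)
      (auto simp: has_real_derivative_iff_has_vector_derivative[symmetric]
        intro: has_field_derivative_at_within)
  then show "(\<lambda>s. 1 / (d\<^sup>2 + (s - c)\<^sup>2)) integrable_on {a..b}"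
    by blast
  have "arctan ((b - c) / d) - arctan ((a - c) / d) \<le> pi"
    using arctan_bounded[of "(b - c) / d"] arctan_bounded[of "(a - c) / d"] by linarith
  then show "integral {a..b} (\<lambda>s. 1 / (d\<^sup>2 + (s - c)\<^sup>2)) \<le> pi / d"
    using integral_unique[OF int] \<open>0 < d\<close>
    by (simp add: diff_divide_distrib[symmetric] divide_right_mono)
qed

lemma abs_sinh_div_sinh_le_1:
  fixes x y :: real
  assumes "\<bar>x\<bar> \<le> \<bar>y\<bar>" "y \<noteq> 0"
  shows "\<bar>sinh x / sinh y\<bar> \<le> 1"
proof -
  have "\<bar>sinh x\<bar> \<le> \<bar>sinh y\<bar>"
    using assms(1) by (simp flip: sinh_real_abs)
  then show ?thesis
    using assms(2) by (simp add: abs_divide divide_le_eq_1)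
qed

lemma power2_le_of_le_mult_add:
  fixes x p r :: real
  assumes "x\<^sup>2 \<le> p * x + r"
  shows "x\<^sup>2 \<le> p\<^sup>2 + 2 * r"
proof -
  have "0 \<le> (x - p)\<^sup>2"
    by simp
  with assms show ?thesis
    by (simp add: power2_eq_square algebra_simps)
qed

lemma powr_cube_root_scaling:
  fixes nu K :: real
  assumes pos: "0 < nu" "0 < K"
  defines "d \<equiv> (nu / K) powr (1/3)"
  shows "0 < d" and "nu = K * d ^ 3" and "K * d = nu powr (1/3) * K powr (2/3)"
    and "nu powr (-1/6) * K powr (-5/6) = 1 / (K * sqrt d)"
proof -
  show "0 < d"
    using pos by (simp add: d_def)
  have "d ^ 3 = nu / K"
    using pos by (simp add: d_def powr_powr flip: powr_realpow)
  then show "nu = K * d ^ 3"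
    using pos by simp
  have K_pow: "K powr (2/3) = K / K powr (1/3)" "K powr (5/6) = K / K powr (1/6)"
    using pos powr_diff[of K 1 "1/3"] powr_diff[of K 1 "1/6"] by simp_all
  have "d = nu powr (1/3) / K powr (1/3)"
    using pos by (simp add: d_def powr_divide)
  then show "K * d = nu powr (1/3) * K powr (2/3)"
    unfolding K_pow by simp
  have "sqrt d = nu powr (1/6) / K powr (1/6)"
    using pos by (simp add: d_def powr_powr powr_divide flip: powr_half_sqrt)
  then have "K * sqrt d = nu powr (1/6) * K powr (5/6)"
    using pos unfolding K_pow by simp
  moreover have "nu powr (-1/6) * K powr (-5/6) = 1 / (nu powr (1/6) * K powr (5/6))"
    using pos by (simp add: powr_minus_divide)
  ultimately show "nu powr (-1/6) * K powr (-5/6) = 1 / (K * sqrt d)"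
    by simp
qed

lemma power2_le_of_split_and_weighted_bounds:
  fixes K d P N M S :: real
  assumes "0 < d" "0 \<le> S"
    and weighted: "(K * M)\<^sup>2 \<le> P\<^sup>2 + 2 * K\<^sup>2 * d ^ 3 * S"
    and split: "N\<^sup>2 \<le> 2 * pi * d * S + M\<^sup>2 / d\<^sup>2"
  shows "(K * d * N)\<^sup>2 \<le> P\<^sup>2 + 10 * K\<^sup>2 * d ^ 3 * S"
proof -
  have "(K * d * N)\<^sup>2 \<le> K\<^sup>2 * d\<^sup>2 * (2 * pi * d * S + M\<^sup>2 / d\<^sup>2)"
    using mult_left_mono[OF split, of "K\<^sup>2 * d\<^sup>2"] by (simp add: power_mult_distrib)
  also have "\<dots> = 2 * pi * (K\<^sup>2 * d ^ 3 * S) + (K * M)\<^sup>2"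
    using assms(1) by (simp add: field_simps power2_eq_square power3_eq_cube)
  also have "2 * pi * (K\<^sup>2 * d ^ 3 * S) \<le> 8 * (K\<^sup>2 * d ^ 3 * S)"
    by (rule mult_right_mono) (use pi_less_4 assms(1,2) in auto)
  finally show ?thesis
    using weighted by simp
qed

text \<open>If \<open>K d N > 400 P\<close>, the energy bound forces \<open>d D \<le> N / 14\<close>; with \<open>S \<le> N D\<close> the
  previous lemma then gives \<open>(K d N)\<^sup>2 \<le> 7/2 P\<^sup>2\<close>, a contradiction.\<close>

lemma L2_bound_of_energy_bounds:
  fixes K d e P N D M S :: real
  assumes K: "0 < K" and d: "0 < d" and e: "e \<le> 1/400"
    and nonneg: "0 \<le> P" "0 \<le> N" "0 \<le> S"
    and energy: "K * d ^ 3 * D\<^sup>2 \<le> P * N + e * (K * d) * N\<^sup>2"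
    and weighted: "(K * M)\<^sup>2 \<le> P\<^sup>2 + 2 * K\<^sup>2 * d ^ 3 * S"
    and S: "S \<le> N * D"
    and split: "N\<^sup>2 \<le> 2 * pi * d * S + M\<^sup>2 / d\<^sup>2"
  shows "K * d * N \<le> 400 * P"
proof (rule ccontr)
  assume "\<not> K * d * N \<le> 400 * P"
  then have big: "400 * P < K * d * N"
    by simp
  have "K * d * (d\<^sup>2 * D\<^sup>2) \<le> K * d * (N\<^sup>2 / 200)"
  proof -
    have "P * N \<le> K * d * N\<^sup>2 / 400"
      using mult_right_mono[OF less_imp_le[OF big] nonneg(2)] by (simp add: power2_eq_square)
    moreover have "e * (K * d) * N\<^sup>2 \<le> K * d * N\<^sup>2 / 400"
      using mult_right_mono[OF e, of "K * d * N\<^sup>2"] K d by simp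
    ultimately show ?thesis
      using energy by (simp add: power2_eq_square power3_eq_cube algebra_simps)
  qed
  then have "(d * D)\<^sup>2 \<le> N\<^sup>2 / 200"
    using K d by (simp add: power_mult_distrib)
  also have "\<dots> \<le> (N / 14)\<^sup>2"
    by (simp add: power_divide)
  finally have "d * D \<le> N / 14"
    by (rule power2_le_imp_le) (use nonneg in simp)
  then have "K\<^sup>2 * d ^ 3 * S \<le> (K * d * N)\<^sup>2 / 14"
  proof -
    have "K\<^sup>2 * d ^ 3 * S \<le> (K * d * N) * (K * d) * (d * D)"
      using mult_left_mono[OF S, of "K\<^sup>2 * d ^ 3"] K d
      by (simp add: power2_eq_square power3_eq_cube mult_ac)
    also have "\<dots> \<le> (K * d * N) * (K * d) * (N / 14)"
      using \<open>d * D \<le> N / 14\<close> K d nonneg by (simp add: mult_left_mono)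
    finally show ?thesis
      by (simp add: power2_eq_square mult_ac)
  qed
  with power2_le_of_split_and_weighted_bounds[OF d nonneg(3) weighted split]
  have "(K * d * N)\<^sup>2 \<le> 7 / 2 * P\<^sup>2"
    by simp
  moreover have "(400 * P)\<^sup>2 < (K * d * N)\<^sup>2"
    by (rule power_strict_mono) (use big nonneg in auto)
  ultimately have "(400 * P)\<^sup>2 < 7 / 2 * P\<^sup>2"
    by linarith
  then show False
    by (simp add: power_mult_distrib)
qed

lemma weighted_L2_bound_of_energy_bounds:
  fixes K d e P N D M S :: real
  assumes K: "0 < K" and d: "0 < d" and e: "0 \<le> e" "e \<le> 1/400"
    and nonneg: "0 \<le> P" "0 \<le> N"
    and energy: "K * d ^ 3 * D\<^sup>2 \<le> P * N + e * (K * d) * N\<^sup>2"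
    and weighted: "(K * M)\<^sup>2 \<le> P\<^sup>2 + 2 * K\<^sup>2 * d ^ 3 * S"
    and S: "S \<le> N * D"
    and N: "K * d * N \<le> 400 * P"
  shows "K * M \<le> 160 * P"
proof -
  have "e * (K * d) * N\<^sup>2 = e * (K * d * N) * N"
    by (simp add: power2_eq_square)
  also have "\<dots> \<le> (1/400) * (400 * P) * N"
    by (intro mult_right_mono mult_mono[OF e(2) N]) (use e K d nonneg in auto)
  finally have "e * (K * d) * N\<^sup>2 \<le> P * N"
    by simp
  with energy have energy': "K * d ^ 3 * D\<^sup>2 \<le> 2 * P * N"
    by simp
  define T where "T = d ^ 3 * D * N"
  have "(K\<^sup>2 * T)\<^sup>2 = K ^ 3 * d ^ 3 * N\<^sup>2 * (K * d ^ 3 * D\<^sup>2)"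
    unfolding T_def by (simp add: power2_eq_square power3_eq_cube algebra_simps)
  also have "\<dots> \<le> K ^ 3 * d ^ 3 * N\<^sup>2 * (2 * P * N)"
    by (rule mult_left_mono[OF energy']) (use K d in simp)
  also have "\<dots> = 2 * P * (K * d * N) ^ 3"
    by (simp add: power2_eq_square power3_eq_cube algebra_simps)
  also have "\<dots> \<le> 2 * P * (400 * P) ^ 3"
    by (rule mult_left_mono[OF power_mono[OF N]]) (use K d nonneg in auto)
  also have "\<dots> \<le> (11400 * P\<^sup>2)\<^sup>2"
    using nonneg by (simp add: power2_eq_square power3_eq_cube)
  finally have T_bound: "K\<^sup>2 * T \<le> 11400 * P\<^sup>2"
    by (rule power2_le_imp_le) (use nonneg in auto)
  have "K\<^sup>2 * d ^ 3 * S \<le> K\<^sup>2 * T"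
    unfolding T_def using mult_left_mono[OF S, of "K\<^sup>2 * d ^ 3"] K d by (simp add: algebra_simps)
  with weighted T_bound have "(K * M)\<^sup>2 \<le> 22801 * P\<^sup>2"
    by linarith
  also have "\<dots> \<le> (160 * P)\<^sup>2"
    by (simp add: power_mult_distrib)
  finally have "(K * M)\<^sup>2 \<le> (160 * P)\<^sup>2" .
  then show ?thesis
    by (rule power2_le_imp_le) (use nonneg in simp)
qed

lemma coefficient_bound_of_L2_bounds:
  fixes K d P N M :: real
  assumes K: "0 < K" and d: "0 < d" "d \<le> 1" and nonneg: "0 \<le> P" "0 \<le> N" "0 \<le> M"
    and N: "K * d * N \<le> 400 * P" and M: "K * M \<le> 160 * P"
  shows "6 * (sqrt (d\<^sup>2 * N\<^sup>2 + M\<^sup>2) * sqrt (pi / d)) + 2 * (M * sqrt 2) \<le> 6000 * P / (K * sqrt d)"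
proof -
  have "(K * d * N)\<^sup>2 + (K * M)\<^sup>2 \<le> (400 * P)\<^sup>2 + (160 * P)\<^sup>2"
    by (intro add_mono power_mono) (use N M K d nonneg in auto)
  also have "\<dots> \<le> (431 * P)\<^sup>2"
    by (simp add: power2_eq_square)
  finally have "d\<^sup>2 * N\<^sup>2 + M\<^sup>2 \<le> (431 * P / K)\<^sup>2"
    using K by (simp add: power_mult_distrib power_divide field_simps)
  with K nonneg have "sqrt (d\<^sup>2 * N\<^sup>2 + M\<^sup>2) \<le> 431 * P / K"
    by (intro real_le_lsqrt) auto
  moreover have "sqrt (pi / d) \<le> 2 / sqrt d"
  proof -
    have "sqrt pi \<le> 2"
      by (rule real_le_lsqrt) (use pi_less_4 in auto)
    then show ?thesis
      using d by (simp add: real_sqrt_divide divide_right_mono)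
  qed
  ultimately have "sqrt (d\<^sup>2 * N\<^sup>2 + M\<^sup>2) * sqrt (pi / d) \<le> (431 * P / K) * (2 / sqrt d)"
    by (rule mult_mono) (use K d nonneg in auto)
  also have "\<dots> = 862 * (P / (K * sqrt d))"
    by simp
  moreover have "M * sqrt 2 \<le> 320 * (P / (K * sqrt d))"
  proof -
    have "M * sqrt 2 \<le> M * 2"
      by (rule mult_left_mono) (use nonneg real_sqrt_le_iff[of 2 4] in auto)
    also have "\<dots> \<le> 320 * P / K"
      using M K by (simp add: field_simps)
    also have "\<dots> \<le> 320 * P / K / sqrt d"
      using K d nonneg by (simp add: le_divide_eq mult_left_le real_sqrt_le_1_iff)
    finally show ?thesis
      by simp
  qed
  moreover have "0 \<le> P / (K * sqrt d)"
    using K d nonneg by simp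
  ultimately show ?thesis
    by simp
qed

section \<open>Energy estimates for the resolvent equation\<close>

locale resolvent_solution =
  fixes nu k lam em :: real and F w w' :: "real \<Rightarrow> complex"
  assumes nu_pos: "0 < nu"
    and F_L2: "is_L2 F"
    and w_boundary: "w (-1) = 0" "w 1 = 0"
    and w_deriv: "\<And>y. y \<in> {-1..1} \<Longrightarrow> (w has_vector_derivative w' y) (at y within {-1..1})"
    and w'_eq: "\<And>y. y \<in> {-1..1} \<Longrightarrow>
      ((\<lambda>s. complex_of_real (k\<^sup>2) * w s
          + (\<i> * complex_of_real (k * (s - lam)) * w s - complex_of_real em * w s - F s)
            / complex_of_real nu) has_integral (w' y - w' (-1))) {-1..y}"
begin

definition coeff :: "real \<Rightarrow> complex"
  where "coeff s = complex_of_real (nu * k\<^sup>2 - em) + \<i> * complex_of_real (k * (s - lam))"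

definition w'' :: "real \<Rightarrow> complex"
  where "w'' s = (coeff s * w s - F s) / complex_of_real nu"

definition w_weighted :: "real \<Rightarrow> complex"
  where "w_weighted s = complex_of_real (s - lam) * w s"

definition L1_w_w' :: real
  where "L1_w_w' = integral {-1..1} (\<lambda>s. cmod (w s) * cmod (w' s))"

lemma w_continuous: "continuous_on {-1..1} w"
  using w_deriv by (rule continuous_on_vector_derivative)

lemma F_absolutely_integrable: "F absolutely_integrable_on {-1..1}"
proof (rule measurable_bounded_by_integrable_imp_absolutely_integrable)
  show "F \<in> borel_measurable (lebesgue_on {-1..1})"
    using F_L2 by (simp add: is_L2_def)
  show "(\<lambda>y. 1 + (cmod (F y))\<^sup>2) integrable_on {-1..1}"
    using F_L2 by (intro integrable_add integrable_on_lebesgue_on) (auto simp: is_L2_def)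
  show "cmod (F y) \<le> 1 + (cmod (F y))\<^sup>2" for y
    using sum_power2_ge_zero[of "cmod (F y) - 1/2" 0] by (simp add: power2_eq_square algebra_simps)
qed auto

lemma w''_has_integral: "y \<in> {-1..1} \<Longrightarrow> (w'' has_integral (w' y - w' (-1))) {-1..y}"
proof -
  assume "y \<in> {-1..1}"
  moreover have "(\<lambda>s. complex_of_real (k\<^sup>2) * w s
          + (\<i> * complex_of_real (k * (s - lam)) * w s - complex_of_real em * w s - F s)
            / complex_of_real nu) = w''"
    using nu_pos by (auto simp: fun_eq_iff w''_def coeff_def field_simps)
  ultimately show ?thesis
    using w'_eq by metis
qed

lemma w''_absolutely_integrable: "w'' absolutely_integrable_on {-1..1}"
proof -
  have "(\<lambda>s. coeff s * w s / complex_of_real nu - F s / complex_of_real nu)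
      absolutely_integrable_on {-1..1}"
    unfolding coeff_def
    by (intro set_integral_diff(1) absolutely_integrable_continuous_real set_integrable_divide
        F_absolutely_integrable continuous_intros w_continuous)
  moreover have "w'' = (\<lambda>s. coeff s * w s / complex_of_real nu - F s / complex_of_real nu)"
    by (simp add: fun_eq_iff w''_def diff_divide_distrib)
  ultimately show ?thesis
    by simp
qed

lemma w'_continuous: "continuous_on {-1..1} w'"
proof -
  have "continuous_on {-1..1} (\<lambda>t. w' (-1) + integral {-1..t} w'')"
    using w''_absolutely_integrable set_lebesgue_integral_eq_integral(1)
    by (intro continuous_intros indefinite_integral_continuous_1) blast
  then show ?thesis
    by (rule continuous_on_eq) (simp add: integral_unique[OF w''_has_integral])
qed

lemma weak_formulation:
  fixes p p' :: "real \<Rightarrow> complex"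
  assumes p: "\<And>t. t \<in> {-1..1} \<Longrightarrow> (p has_vector_derivative p' t) (at t within {-1..1})"
    and p': "continuous_on {-1..1} p'" and p_boundary: "p (-1) = 0" "p 1 = 0"
  shows "integral {-1..1} (\<lambda>s. F s * p s)
    = integral {-1..1} (\<lambda>s. coeff s * w s * p s) + nu * integral {-1..1} (\<lambda>s. w' s * p' s)"
proof -
  have p_cont: "continuous_on {-1..1} p"
    using p by (rule continuous_on_vector_derivative)
  have pw''_int: "(\<lambda>s. p s * w'' s) integrable_on {-1..1}"
    using absolutely_integrable_continuous_mult[OF w''_absolutely_integrable p_cont]
      set_lebesgue_integral_eq_integral(1) by blast
  have coeff_int: "(\<lambda>s. coeff s * w s * p s) integrable_on {-1..1}"
    unfolding coeff_def by (intro integrable_continuous_interval continuous_intros w_continuous p_cont)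
  have "integral {-1..1} (\<lambda>s. F s * p s)
      = integral {-1..1} (\<lambda>s. coeff s * w s * p s - nu * (p s * w'' s))"
    using nu_pos by (intro integral_cong) (simp add: w''_def field_simps)
  also have "\<dots> = integral {-1..1} (\<lambda>s. coeff s * w s * p s) - nu * integral {-1..1} (\<lambda>s. p s * w'' s)"
    using pw''_int coeff_int by (simp add: integral_diff integrable_on_mult_right)
  also have "integral {-1..1} (\<lambda>s. p s * w'' s) = - integral {-1..1} (\<lambda>s. w' s * p' s)"
    using integration_by_parts_indefinite_integral[OF _ w''_absolutely_integrable w''_has_integral p p']
      p_boundary by (simp add: mult.commute)
  finally show ?thesis
    by simp
qed

lemma norm_integral_F_mult_le:
  assumes "continuous_on {-1..1} p"
  shows "norm (integral {-1..1} (\<lambda>s. F s * p s)) \<le> L2norm F * L2norm p"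
proof (rule norm_integral_mult_le_L2norm)
  show "(\<lambda>s. F s * p s) absolutely_integrable_on {-1..1}"
    using absolutely_integrable_continuous_mult[OF F_absolutely_integrable assms]
    by (simp add: mult.commute)
qed (use F_L2 assms in \<open>auto simp: is_L2_def intro: square_integrable_continuous\<close>)

lemma energy_estimate:
  "(nu * k\<^sup>2 - em) * (L2norm w)\<^sup>2 + nu * (L2norm w')\<^sup>2 \<le> L2norm F * L2norm w"
proof -
  have "integral {-1..1} (\<lambda>s. F s * cnj (w s))
      = integral {-1..1} (\<lambda>s. coeff s * w s * cnj (w s)) + nu * integral {-1..1} (\<lambda>s. w' s * cnj (w' s))"
    by (rule weak_formulation)
      (auto intro!: has_vector_derivative_cnj w_deriv continuous_intros w'_continuous simp: w_boundary)
  moreover have "Re (integral {-1..1} (\<lambda>s. coeff s * w s * cnj (w s))) = (nu * k\<^sup>2 - em) * (L2norm w)\<^sup>2"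
  proof -
    have "Re (coeff s * w s * cnj (w s)) = (nu * k\<^sup>2 - em) * (cmod (w s))\<^sup>2" for s
      by (simp add: mult.assoc complex_norm_square[symmetric] coeff_def)
    then show ?thesis
      by (simp add: Re_integral integrable_continuous_interval continuous_intros w_continuous coeff_def
          L2norm_power2 square_integrable_continuous)
  qed
  moreover have "Re (integral {-1..1} (\<lambda>s. w' s * cnj (w' s))) = (L2norm w')\<^sup>2"
    by (simp add: Re_integral integrable_continuous_interval continuous_intros w'_continuous
        L2norm_power2 square_integrable_continuous flip: complex_norm_square)
  moreover have "Re (integral {-1..1} (\<lambda>s. F s * cnj (w s))) \<le> L2norm F * L2norm w"
    using complex_Re_le_cmod order_trans norm_integral_F_mult_le[of "\<lambda>s. cnj (w s)"]
    by (auto intro: continuous_intros w_continuous simp: L2norm_cnj)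
  ultimately show ?thesis
    by simp
qed

lemma w_weighted_continuous: "continuous_on {-1..1} w_weighted"
  unfolding w_weighted_def by (intro continuous_intros w_continuous)

lemma L1_w_w'_le: "L1_w_w' \<le> L2norm w * L2norm w'"
  unfolding L1_w_w'_def
  by (intro integral_norm_mult_le_L2norm absolutely_integrable_continuous_real continuous_intros
      square_integrable_continuous w_continuous w'_continuous)

lemma Im_coeff_mult_weighted:
  "Im (coeff s * w s * (complex_of_real (s - lam) * cnj (w s))) = k * (cmod (w_weighted s))\<^sup>2"
proof -
  have "coeff s * w s * (complex_of_real (s - lam) * cnj (w s))
      = coeff s * complex_of_real (s - lam) * (w s * cnj (w s))"
    by (simp add: mult_ac)
  also have "\<dots> = coeff s * complex_of_real ((s - lam) * (cmod (w s))\<^sup>2)"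
    by (simp only: mult.assoc of_real_mult complex_norm_square)
  finally have eq: "coeff s * w s * (complex_of_real (s - lam) * cnj (w s))
      = coeff s * complex_of_real ((s - lam) * (cmod (w s))\<^sup>2)" .
  show ?thesis
    unfolding eq w_weighted_def
    by (simp add: coeff_def norm_mult power_mult_distrib power2_eq_square del: of_real_diff)
qed

lemma weighted_test_identity:
  "k * (L2norm w_weighted)\<^sup>2 + nu * integral {-1..1} (\<lambda>s. Im (w' s * cnj (w s)))
    = Im (integral {-1..1} (\<lambda>s. F s * (complex_of_real (s - lam) * cnj (w s))))"
proof -
  define p where "p s = complex_of_real (s - lam) * cnj (w s)" for s
  define p' where "p' s = complex_of_real (s - lam) * cnj (w' s) + 1 * cnj (w s)" for s
  have p_deriv: "(p has_vector_derivative p' t) (at t within {-1..1})" if "t \<in> {-1..1}" for t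
    unfolding p_def p'_def
    by (intro has_vector_derivative_mult has_vector_derivative_cnj w_deriv that
        has_vector_derivative_of_real[where f="\<lambda>s. s - lam", simplified] derivative_eq_intros) auto
  have "integral {-1..1} (\<lambda>s. F s * p s)
      = integral {-1..1} (\<lambda>s. coeff s * w s * p s) + nu * integral {-1..1} (\<lambda>s. w' s * p' s)"
    by (rule weak_formulation[OF p_deriv])
      (auto intro!: continuous_intros w_continuous w'_continuous simp: p_def p'_def w_boundary)
  moreover have "Im (integral {-1..1} (\<lambda>s. coeff s * w s * p s)) = k * (L2norm w_weighted)\<^sup>2"
    using Im_coeff_mult_weighted
    by (simp add: Im_integral integrable_continuous_interval continuous_intros w_continuous coeff_def
        p_def L2norm_power2 square_integrable_continuous w_weighted_continuous)
  moreover have "Im (w' s * p' s) = Im (w' s * cnj (w s))" for s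
  proof -
    have "w' s * p' s = complex_of_real (s - lam) * (w' s * cnj (w' s)) + w' s * cnj (w s)"
      by (simp add: p'_def algebra_simps)
    also have "\<dots> = complex_of_real ((s - lam) * (cmod (w' s))\<^sup>2) + w' s * cnj (w s)"
      by (simp only: of_real_mult complex_norm_square)
    finally show ?thesis
      by simp
  qed
  then have "Im (integral {-1..1} (\<lambda>s. w' s * p' s)) = integral {-1..1} (\<lambda>s. Im (w' s * cnj (w s)))"
    by (simp add: Im_integral integrable_continuous_interval continuous_intros w_continuous
        w'_continuous p'_def)
  ultimately show ?thesis
    by (simp add: p_def)
qed

lemma energy_estimate_weighted:
  "\<bar>k\<bar> * (L2norm w_weighted)\<^sup>2 \<le> L2norm F * L2norm w_weighted + nu * L1_w_w'"
proof -
  define p where "p s = complex_of_real (s - lam) * cnj (w s)" for s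
  define J where "J = integral {-1..1} (\<lambda>s. Im (w' s * cnj (w s)))"
  have "k * (L2norm w_weighted)\<^sup>2 = Im (integral {-1..1} (\<lambda>s. F s * p s)) - nu * J"
    using weighted_test_identity unfolding p_def J_def by linarith
  then have "\<bar>k\<bar> * (L2norm w_weighted)\<^sup>2 = \<bar>Im (integral {-1..1} (\<lambda>s. F s * p s)) - nu * J\<bar>"
    by (metis abs_mult abs_of_nonneg zero_le_power2)
  also have "\<dots> \<le> \<bar>Im (integral {-1..1} (\<lambda>s. F s * p s))\<bar> + nu * \<bar>J\<bar>"
    using abs_triangle_ineq4[of _ "nu * J"] nu_pos by (simp add: abs_mult)
  finally have "\<bar>k\<bar> * (L2norm w_weighted)\<^sup>2 \<le> \<bar>Im (integral {-1..1} (\<lambda>s. F s * p s))\<bar> + nu * \<bar>J\<bar>" .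
  moreover have "\<bar>Im (integral {-1..1} (\<lambda>s. F s * p s))\<bar> \<le> L2norm F * L2norm w_weighted"
  proof -
    have "L2norm p = L2norm w_weighted"
      by (simp add: L2norm_def p_def w_weighted_def norm_mult)
    then show ?thesis
      using abs_Im_le_cmod order_trans norm_integral_F_mult_le[of p]
      by (fastforce intro: continuous_intros w_continuous simp: p_def)
  qed
  moreover have "norm J \<le> L1_w_w'"
    unfolding L1_w_w'_def J_def
  proof (rule integral_norm_bound_integral)
    show "norm (Im (w' s * cnj (w s))) \<le> cmod (w s) * cmod (w' s)" for s
      using abs_Im_le_cmod[of "w' s * cnj (w s)"] by (simp add: norm_mult mult.commute)
  qed (auto intro!: integrable_continuous_interval continuous_intros w_continuous w'_continuous)
  then have "nu * \<bar>J\<bar> \<le> nu * L1_w_w'"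
    using nu_pos by simp
  ultimately show ?thesis
    by linarith
qed

lemma L1_w_w'_nonneg: "0 \<le> L1_w_w'"
  unfolding L1_w_w'_def
  by (intro integral_nonneg integrable_continuous_interval continuous_intros w_continuous
      w'_continuous) simp

lemma norm_w_power2_le:
  assumes y: "y \<in> {-1..1}"
  shows "(cmod (w y))\<^sup>2 \<le> 2 * L1_w_w'"
proof -
  have sub: "{-1..y} \<subseteq> {-1..1}"
    using y by auto
  define q' where "q' s = w s * cnj (w' s) + w' s * cnj (w s)" for s
  have "((\<lambda>s. w s * cnj (w s)) has_vector_derivative q' s) (at s within {-1..y})"
    if "s \<in> {-1..y}" for s
    using that sub unfolding q'_def
    by (intro has_vector_derivative_within_subset[OF has_vector_derivative_mult[OF w_deriv
          has_vector_derivative_cnj[OF w_deriv]]]) auto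
  then have "(q' has_integral (w y * cnj (w y) - w (-1) * cnj (w (-1)))) {-1..y}"
    using y by (intro fundamental_theorem_of_calculus) auto
  then have "integral {-1..y} q' = complex_of_real ((cmod (w y))\<^sup>2)"
    using w_boundary by (simp add: integral_unique flip: complex_norm_square)
  then have "(cmod (w y))\<^sup>2 = norm (integral {-1..y} q')"
    by (simp add: norm_power)
  also have "\<dots> \<le> integral {-1..y} (\<lambda>s. 2 * (cmod (w s) * cmod (w' s)))"
  proof (rule integral_norm_bound_integral)
    show "norm (q' s) \<le> 2 * (cmod (w s) * cmod (w' s))" for s
      unfolding q'_def using norm_triangle_ineq[of "w s * cnj (w' s)" "w' s * cnj (w s)"]
      by (simp add: norm_mult)
  qed (auto simp: q'_def intro!: integrable_continuous_interval continuous_intros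
      continuous_on_subset[OF w_continuous sub] continuous_on_subset[OF w'_continuous sub])
  also have "\<dots> \<le> integral {-1..1} (\<lambda>s. 2 * (cmod (w s) * cmod (w' s)))"
    by (rule integral_subset_le[OF sub])
      (auto intro!: integrable_continuous_interval continuous_intros w_continuous w'_continuous
        continuous_on_subset[OF w_continuous sub] continuous_on_subset[OF w'_continuous sub])
  finally show ?thesis
    by (simp add: L1_w_w'_def)
qed

lemma L2norm_w_power2_le:
  assumes d: "0 < d"
  shows "(L2norm w)\<^sup>2 \<le> 2 * pi * d * L1_w_w' + (L2norm w_weighted)\<^sup>2 / d\<^sup>2"
proof -
  define \<rho> where "\<rho> s = 1 / (d\<^sup>2 + (s - lam)\<^sup>2)" for s
  have \<rho>: "\<rho> integrable_on {-1..1}" "integral {-1..1} \<rho> \<le> pi / d"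
    unfolding \<rho>_def using Lorentzian_integral_le[of "-1" 1 d lam] d by auto
  have pointwise: "(cmod (w s))\<^sup>2 \<le> 2 * L1_w_w' * d\<^sup>2 * \<rho> s + (cmod (w_weighted s))\<^sup>2 / d\<^sup>2"
    if "s \<in> {-1..1}" for s
  proof -
    define a t where "a = (cmod (w s))\<^sup>2" and "t = (s - lam)\<^sup>2"
    have a: "0 \<le> a" "a \<le> 2 * L1_w_w'" and t: "0 \<le> t"
      using norm_w_power2_le[OF that] by (auto simp: a_def t_def)
    have "0 < d\<^sup>2 + t"
      using d t by (simp add: add_pos_nonneg)
    then have "a = a * d\<^sup>2 / (d\<^sup>2 + t) + a * t / (d\<^sup>2 + t)"
      by (simp add: add_divide_distrib[symmetric] distrib_left[symmetric])
    also have "a * d\<^sup>2 / (d\<^sup>2 + t) \<le> 2 * L1_w_w' * d\<^sup>2 / (d\<^sup>2 + t)"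
      using a d t by (intro divide_right_mono mult_right_mono) auto
    also have "a * t / (d\<^sup>2 + t) \<le> a * t / d\<^sup>2"
      using a d t by (intro frac_le) auto
    finally show ?thesis
      by (simp add: a_def t_def \<rho>_def w_weighted_def norm_mult power_mult_distrib mult.commute
          del: of_real_diff)
  qed
  have weighted_int: "(\<lambda>s. (cmod (w_weighted s))\<^sup>2 / d\<^sup>2) integrable_on {-1..1}"
    by (intro integrable_on_divide integrable_continuous_interval continuous_intros
        w_weighted_continuous)
  have "(L2norm w)\<^sup>2 \<le> integral {-1..1} (\<lambda>s. 2 * L1_w_w' * d\<^sup>2 * \<rho> s + (cmod (w_weighted s))\<^sup>2 / d\<^sup>2)"
    unfolding L2norm_power2[OF square_integrable_continuous[OF w_continuous]]
    using pointwise
    by (intro integral_le integrable_add integrable_on_mult_right[OF \<rho>(1)] weighted_int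
        integrable_continuous_interval continuous_intros w_continuous) auto
  also have "\<dots> = 2 * L1_w_w' * d\<^sup>2 * integral {-1..1} \<rho> + (L2norm w_weighted)\<^sup>2 / d\<^sup>2"
    using integrable_on_mult_right[OF \<rho>(1)] weighted_int
    by (simp add: integral_add integral_divide L2norm_power2 square_integrable_continuous
        w_weighted_continuous)
  also have "\<dots> \<le> 2 * L1_w_w' * d\<^sup>2 * (pi / d) + (L2norm w_weighted)\<^sup>2 / d\<^sup>2"
    using \<rho>(2) L1_w_w'_nonneg by (intro add_right_mono mult_left_mono) auto
  finally show ?thesis
    using d by (simp add: power2_eq_square mult_ac)
qed

lemma integral_norm_w_le:
  assumes d: "0 < d"
  shows "integral {-1..1} (\<lambda>s. cmod (w s))
    \<le> sqrt (d\<^sup>2 * (L2norm w)\<^sup>2 + (L2norm w_weighted)\<^sup>2) * sqrt (pi / d)"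
proof -
  define r where "r s = sqrt (d\<^sup>2 + (s - lam)\<^sup>2)" for s
  have r_pos: "0 < r s" for s
    using d by (simp add: r_def add_pos_nonneg)
  then have r_nonzero: "r s \<noteq> 0" for s
    using less_irrefl by metis
  have r_cont: "continuous_on {-1..1} r"
    unfolding r_def by (intro continuous_intros)
  define f g where "f s = complex_of_real (r s) * w s" and "g s = complex_of_real (1 / r s)" for s
  have f_cont: "continuous_on {-1..1} f" and g_cont: "continuous_on {-1..1} g"
    unfolding f_def g_def by (auto intro!: continuous_intros r_cont w_continuous simp: r_nonzero)
  have "integral {-1..1} (\<lambda>s. cmod (w s)) = integral {-1..1} (\<lambda>s. cmod (f s) * cmod (g s))"
    by (intro integral_cong) (simp add: f_def g_def norm_mult norm_divide r_nonzero)
  also have "\<dots> \<le> L2norm f * L2norm g"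
    by (intro integral_norm_mult_le_L2norm absolutely_integrable_continuous_real continuous_intros
        square_integrable_continuous f_cont g_cont)
  also have "L2norm f = sqrt (d\<^sup>2 * (L2norm w)\<^sup>2 + (L2norm w_weighted)\<^sup>2)"
  proof -
    have "(cmod (f s))\<^sup>2 = d\<^sup>2 * (cmod (w s))\<^sup>2 + (cmod (w_weighted s))\<^sup>2" for s
      using r_pos[of s] by (simp add: f_def r_def w_weighted_def norm_mult power_mult_distrib
          algebra_simps del: of_real_diff)
    then have "integral {-1..1} (\<lambda>s. (cmod (f s))\<^sup>2) = d\<^sup>2 * (L2norm w)\<^sup>2 + (L2norm w_weighted)\<^sup>2"
      by (simp add: integral_add L2norm_power2 square_integrable_continuous w_continuous
          w_weighted_continuous integrable_continuous_interval continuous_intros)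
    then show ?thesis
      by (simp add: L2norm_eq_sqrt_integral square_integrable_continuous f_cont)
  qed
  also have "L2norm g \<le> sqrt (pi / d)"
  proof -
    have "(cmod (g s))\<^sup>2 = 1 / (d\<^sup>2 + (s - lam)\<^sup>2)" for s
      using r_pos[of s] by (simp add: g_def r_def norm_divide power_divide)
    then have "L2norm g = sqrt (integral {-1..1} (\<lambda>s. 1 / (d\<^sup>2 + (s - lam)\<^sup>2)))"
      by (simp add: L2norm_eq_sqrt_integral[OF square_integrable_continuous[OF g_cont]])
    then show ?thesis
      using Lorentzian_integral_le[of "-1" 1 d lam] d by simp
  qed
  finally show ?thesis
    by (simp add: mult_left_mono)
qed

lemma integral_norm_w_weighted_le:
  "integral {-1..1} (\<lambda>s. cmod (w_weighted s)) \<le> L2norm w_weighted * sqrt 2"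
  using integral_norm_mult_le_L2norm[of w_weighted "\<lambda>_. 1"]
  by (simp add: L2norm_const_1 absolutely_integrable_continuous_real square_integrable_continuous
      w_weighted_continuous)

lemma weighted_norm_kernel_integral_le:
  fixes \<phi> :: "real \<Rightarrow> real" and a :: real
  assumes \<phi>: "continuous_on {-1..1} \<phi>" "\<And>s. s \<in> {-1..1} \<Longrightarrow> \<bar>\<phi> s\<bar> \<le> 1"
    and a: "0 \<le> a" "\<And>s. s \<in> {-1..1} \<Longrightarrow> a \<le> 3 + \<bar>s - lam\<bar>"
  shows "a * cmod (integral {-1..1} (\<lambda>y. complex_of_real (\<phi> y) * w y))
    \<le> 3 * integral {-1..1} (\<lambda>s. cmod (w s)) + integral {-1..1} (\<lambda>s. cmod (w_weighted s))"
proof -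
  have "cmod (integral {-1..1} (\<lambda>y. complex_of_real (\<phi> y) * w y)) \<le> integral {-1..1} (\<lambda>s. cmod (w s))"
    using \<phi> by (intro integral_norm_bound_integral integrable_continuous_interval continuous_intros
        w_continuous) (auto simp: norm_mult mult_left_le_one_le)
  then have "a * cmod (integral {-1..1} (\<lambda>y. complex_of_real (\<phi> y) * w y))
      \<le> integral {-1..1} (\<lambda>s. a * cmod (w s))"
    using a(1) by (simp add: mult_left_mono)
  also have "\<dots> \<le> integral {-1..1} (\<lambda>s. 3 * cmod (w s) + cmod (w_weighted s))"
    using a by (intro integral_le integrable_continuous_interval continuous_intros w_continuous
        w_weighted_continuous)
      (auto simp: w_weighted_def norm_mult distrib_right[symmetric] intro!: mult_right_mono
        simp del: of_real_diff)
  also have "\<dots> = 3 * integral {-1..1} (\<lambda>s. cmod (w s)) + integral {-1..1} (\<lambda>s. cmod (w_weighted s))"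
    by (simp add: integral_add integrable_continuous_interval continuous_intros w_continuous
        w_weighted_continuous)
  finally show ?thesis .
qed

lemma weighted_c1_c2_le_L1:
  assumes "k \<noteq> 0"
  shows "(1 + \<bar>lam - 1\<bar>) * cmod (c1 k w) + (1 + \<bar>lam + 1\<bar>) * cmod (c2 k w)
    \<le> 2 * (3 * integral {-1..1} (\<lambda>s. cmod (w s)) + integral {-1..1} (\<lambda>s. cmod (w_weighted s)))"
proof -
  have "(1 + \<bar>lam - 1\<bar>) * cmod (c1 k w)
      \<le> 3 * integral {-1..1} (\<lambda>s. cmod (w s)) + integral {-1..1} (\<lambda>s. cmod (w_weighted s))"
    unfolding c1_def using assms
    by (intro weighted_norm_kernel_integral_le continuous_intros abs_sinh_div_sinh_le_1)
      (auto simp: abs_mult)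
  moreover have "(1 + \<bar>lam + 1\<bar>) * cmod (c2 k w)
      \<le> 3 * integral {-1..1} (\<lambda>s. cmod (w s)) + integral {-1..1} (\<lambda>s. cmod (w_weighted s))"
    unfolding c2_def using assms
    by (intro weighted_norm_kernel_integral_le continuous_intros abs_sinh_div_sinh_le_1)
      (auto simp: abs_mult)
  ultimately show ?thesis
    by simp
qed

lemma L2_bounds:
  fixes K d e :: real
  assumes K: "K = \<bar>k\<bar>" "0 < K" and d: "0 < d" and nu: "nu = K * d ^ 3"
    and em: "em = e * (K * d)" and e: "0 \<le> e" "e \<le> 1/400"
  shows "K * d * L2norm w \<le> 400 * L2norm F" and "K * L2norm w_weighted \<le> 160 * L2norm F"
proof -
  have "(nu * k\<^sup>2 - em) * (L2norm w)\<^sup>2 = nu * k\<^sup>2 * (L2norm w)\<^sup>2 - em * (L2norm w)\<^sup>2"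
    by (simp add: algebra_simps)
  moreover have "0 \<le> nu * k\<^sup>2 * (L2norm w)\<^sup>2"
    using nu_pos by simp
  ultimately have "nu * (L2norm w')\<^sup>2 \<le> L2norm F * L2norm w + em * (L2norm w)\<^sup>2"
    using energy_estimate by linarith
  then have energy: "K * d ^ 3 * (L2norm w')\<^sup>2 \<le> L2norm F * L2norm w + e * (K * d) * (L2norm w)\<^sup>2"
    unfolding nu em .
  have "(K * L2norm w_weighted)\<^sup>2 \<le> L2norm F * (K * L2norm w_weighted) + K\<^sup>2 * d ^ 3 * L1_w_w'"
    using mult_left_mono[OF energy_estimate_weighted, of K] K
    by (simp add: nu power2_eq_square algebra_simps)
  then have weighted: "(K * L2norm w_weighted)\<^sup>2 \<le> (L2norm F)\<^sup>2 + 2 * K\<^sup>2 * d ^ 3 * L1_w_w'"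
    by (auto dest: power2_le_of_le_mult_add)
  show N: "K * d * L2norm w \<le> 400 * L2norm F"
    by (rule L2_bound_of_energy_bounds[OF K(2) d e(2) L2norm_nonneg L2norm_nonneg
          L1_w_w'_nonneg energy weighted L1_w_w'_le L2norm_w_power2_le[OF d]])
  show "K * L2norm w_weighted \<le> 160 * L2norm F"
    by (rule weighted_L2_bound_of_energy_bounds[OF K(2) d e L2norm_nonneg L2norm_nonneg
          energy weighted L1_w_w'_le N])
qed

lemma weighted_c1_c2_bound:
  assumes nu: "nu \<le> \<bar>k\<bar>" and em: "em = eps * nu powr (1/3) * \<bar>k\<bar> powr (2/3)"
    and eps: "0 \<le> eps" "eps \<le> 1/400"
  shows "(1 + \<bar>lam - 1\<bar>) * cmod (c1 k w) + (1 + \<bar>lam + 1\<bar>) * cmod (c2 k w)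
    \<le> 6000 * nu powr (-1/6) * \<bar>k\<bar> powr (-5/6) * L2norm F"
proof -
  define K where "K = \<bar>k\<bar>"
  have K: "0 < K"
    using nu nu_pos by (simp add: K_def)
  define d where "d = (nu / K) powr (1/3)"
  note scaling = powr_cube_root_scaling[OF nu_pos K, folded d_def]
  have "d ^ 3 \<le> 1 ^ 3"
    using scaling(2) nu K by (simp add: K_def field_simps)
  then have d: "0 < d" "d \<le> 1"
    using scaling(1) power_mono_iff[of d 1 3] by auto
  have em': "em = eps * (K * d)"
    unfolding em scaling(3) by (simp add: K_def)
  note L2 = L2_bounds[OF K_def K d(1) scaling(2) em' eps]
  have "(1 + \<bar>lam - 1\<bar>) * cmod (c1 k w) + (1 + \<bar>lam + 1\<bar>) * cmod (c2 k w)
      \<le> 2 * (3 * integral {-1..1} (\<lambda>s. cmod (w s)) + integral {-1..1} (\<lambda>s. cmod (w_weighted s)))"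
    using K by (intro weighted_c1_c2_le_L1) (simp add: K_def)
  also have "\<dots> \<le> 6 * (sqrt (d\<^sup>2 * (L2norm w)\<^sup>2 + (L2norm w_weighted)\<^sup>2) * sqrt (pi / d))
      + 2 * (L2norm w_weighted * sqrt 2)"
    using integral_norm_w_le[OF d(1)] integral_norm_w_weighted_le by simp
  also have "\<dots> \<le> 6000 * L2norm F / (K * sqrt d)"
    by (rule coefficient_bound_of_L2_bounds[OF K d L2norm_nonneg L2norm_nonneg L2norm_nonneg L2])
  also have "\<dots> = 6000 * (nu powr (-1/6) * K powr (-5/6)) * L2norm F"
    unfolding scaling(4) by simp
  also have "\<dots> = 6000 * nu powr (-1/6) * \<bar>k\<bar> powr (-5/6) * L2norm F"
    by (simp add: K_def)
  finally show ?thesis .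
qed

end

theorem lemma2p8:
  shows "\<exists>eps0 > 0. \<exists>C > 0. \<forall>(nu::real) (k::real) (lam::real) (eps::real)
            (F::real \<Rightarrow> complex) (w::real \<Rightarrow> complex).
    0 < nu \<and> nu \<le> 1 \<and> 10 * nu \<le> \<bar>k\<bar> \<and> \<bar>k\<bar> < 1 \<and> 0 \<le> eps \<and> eps \<le> eps0 \<and>
    is_L2 F \<and> resolvent_sol nu k lam eps F w \<longrightarrow>
      (1 + \<bar>lam - 1\<bar>) * cmod (c1 k w) + (1 + \<bar>lam + 1\<bar>) * cmod (c2 k w)
        \<le> C * nu powr (-1/6) * \<bar>k\<bar> powr (-5/6) * L2norm F"
proof (rule exI[of _ "1/400"], intro conjI exI[of _ 6000] allI impI)
  fix nu k lam eps :: real and F w :: "real \<Rightarrow> complex"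
  assume "0 < nu \<and> nu \<le> 1 \<and> 10 * nu \<le> \<bar>k\<bar> \<and> \<bar>k\<bar> < 1 \<and> 0 \<le> eps \<and> eps \<le> 1/400 \<and>
    is_L2 F \<and> resolvent_sol nu k lam eps F w"
  then have hyps: "0 < nu" "nu \<le> \<bar>k\<bar>" "0 \<le> eps" "eps \<le> 1/400" "is_L2 F"
    and sol: "resolvent_sol nu k lam eps F w"
    by auto
  obtain w' where "resolvent_solution nu k lam (eps * nu powr (1/3) * \<bar>k\<bar> powr (2/3)) F w w'"
    using sol hyps(1,5) unfolding resolvent_sol_def resolvent_solution_def by blast
  then show "(1 + \<bar>lam - 1\<bar>) * cmod (c1 k w) + (1 + \<bar>lam + 1\<bar>) * cmod (c2 k w)
      \<le> 6000 * nu powr (-1/6) * \<bar>k\<bar> powr (-5/6) * L2norm F"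
    using hyps by (intro resolvent_solution.weighted_c1_c2_bound) auto
qed simp_all

end
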